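(* Let $X$ be a set, and let $\tau_1$ and $\tau_2$ be topologies on $X$. Suppose $\mathbb{B}_1=\{\mathcal{B}_1(x):x\in X\}$ is a weak base for $\tau_1$ and $\mathbb{B}_2=\{\mathcal{B}_2(x):x\in X\}$ is a weak base for $\tau_2$. For each $x\in X$ let $\mathcal{B}(x)=\{B_1\cup B_2: B_1\in\mathcal{B}_1(x),\ B_2\in\mathcal{B}_2(x)\}$. Then $\mathbb{B}=\{\mathcal{B}(x):x\in X\}$ is a weak base for the meet $\tau_1\wedge\tau_2$ (the greatest lower bound of $\tau_1,\tau_2$ in the lattice of topologies on $X$, i.e. $\tau_1\cap\tau_2$).
   Context: A weak base on a set $X$ is a family $\mathbb{B}=\{\mathcal{B}(x):x\in X\}$ of filterbases such that $x\in B$ for all $B\in\mathcal{B}(x)$. The topology induced by $\mathbb{B}$ is the one in which $U\subseteq X$ is open iff for each $x\in U$ there is $B\in\mathcal{B}(x)$ with $B\subseteq U$. "$\mathbb{B}$ is a weak base for $\tau$" means that $\tau$ is the topology induced by $\mathbb{B}$. *)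

theory Defs
  imports "HOL-Analysis.Analysis"
begin

definition is_filterbase :: "'a set set \<Rightarrow> bool" where
  "is_filterbase F \<longleftrightarrow> F \<noteq> {} \<and> (\<forall>A\<in>F. \<forall>B\<in>F. \<exists>C\<in>F. C \<subseteq> A \<inter> B)"

definition weak_base_on :: "'a set \<Rightarrow> ('a \<Rightarrow> 'a set set) \<Rightarrow> bool" where
  "weak_base_on X \<B> \<longleftrightarrow>
     (\<forall>x\<in>X. is_filterbase (\<B> x) \<and> (\<forall>B\<in>\<B> x. x \<in> B \<and> B \<subseteq> X))"

definition weak_base_for :: "'a topology \<Rightarrow> ('a \<Rightarrow> 'a set set) \<Rightarrow> bool" where
  "weak_base_for T \<B> \<longleftrightarrow> weak_base_on (topspace T) \<B> \<and>
     (\<forall>U. openin T U \<longleftrightarrow> U \<subseteq> topspace T \<and> (\<forall>x\<in>U. \<exists>B\<in>\<B> x. B \<subseteq> U))"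

definition meet_topology :: "'a topology \<Rightarrow> 'a topology \<Rightarrow> 'a topology" where
  "meet_topology T1 T2 = topology (\<lambda>U. openin T1 U \<and> openin T2 U)"

end

theory Submission
  imports Defs
begin

text \<open>A set contains some \<open>b1 \<union> b2\<close> with \<open>b1 \<in> B1 x\<close>, \<open>b2 \<in> B2 x\<close> iff it contains a member of
  \<open>B1 x\<close> and a member of \<open>B2 x\<close>. So a set satisfies the open-set condition of the joined base
  iff it satisfies those of both \<open>B1\<close> and \<open>B2\<close>, i.e. iff it is open in both topologies.\<close>

definition join_base :: "('a \<Rightarrow> 'a set set) \<Rightarrow> ('a \<Rightarrow> 'a set set) \<Rightarrow> 'a \<Rightarrow> 'a set set" where
  "join_base B1 B2 = (\<lambda>x. {C. \<exists>b1\<in>B1 x. \<exists>b2\<in>B2 x. C = b1 \<union> b2})"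

lemma openin_meet_topology:
  "openin (meet_topology T1 T2) U \<longleftrightarrow> openin T1 U \<and> openin T2 U"
proof -
  have "istopology (\<lambda>U. openin T1 U \<and> openin T2 U)"
    unfolding istopology_def by auto
  then show ?thesis
    unfolding meet_topology_def by simp
qed

lemma topspace_meet_topology:
  assumes "topspace T1 = topspace T2"
  shows "topspace (meet_topology T1 T2) = topspace T1"
proof (rule subset_antisym)
  have "openin T1 (topspace (meet_topology T1 T2))"
    using openin_meet_topology openin_topspace by blast
  then show "topspace (meet_topology T1 T2) \<subseteq> topspace T1"
    by (rule openin_subset)
  have "openin (meet_topology T1 T2) (topspace T1)"
    by (metis assms openin_meet_topology openin_topspace)
  then show "topspace T1 \<subseteq> topspace (meet_topology T1 T2)"
    by (rule openin_subset)
qed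

lemma is_filterbase_join:
  assumes F: "is_filterbase F" and G: "is_filterbase G"
  shows "is_filterbase {C. \<exists>a\<in>F. \<exists>b\<in>G. C = a \<union> b}"
  unfolding is_filterbase_def
proof (intro conjI ballI)
  obtain a b where "a \<in> F" "b \<in> G"
    using F G unfolding is_filterbase_def by blast
  then show "{C. \<exists>a\<in>F. \<exists>b\<in>G. C = a \<union> b} \<noteq> {}"
    by blast
next
  fix A A'
  assume "A \<in> {C. \<exists>a\<in>F. \<exists>b\<in>G. C = a \<union> b}" "A' \<in> {C. \<exists>a\<in>F. \<exists>b\<in>G. C = a \<union> b}"
  then obtain a b a' b' where ab: "a \<in> F" "b \<in> G" "A = a \<union> b"
    and ab': "a' \<in> F" "b' \<in> G" "A' = a' \<union> b'"
    by blast
  obtain c where "c \<in> F" "c \<subseteq> a \<inter> a'"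
    using F ab(1) ab'(1) unfolding is_filterbase_def by blast
  moreover obtain d where "d \<in> G" "d \<subseteq> b \<inter> b'"
    using G ab(2) ab'(2) unfolding is_filterbase_def by blast
  ultimately have "c \<union> d \<in> {C. \<exists>a\<in>F. \<exists>b\<in>G. C = a \<union> b}" and "c \<union> d \<subseteq> A \<inter> A'"
    using ab(3) ab'(3) by auto
  then show "\<exists>C\<in>{C. \<exists>a\<in>F. \<exists>b\<in>G. C = a \<union> b}. C \<subseteq> A \<inter> A'"
    by blast
qed

lemma weak_base_on_join_base:
  assumes "weak_base_on X B1" and "weak_base_on X B2"
  shows "weak_base_on X (join_base B1 B2)"
  unfolding weak_base_on_def
proof
  fix x assume "x \<in> X"
  then have "is_filterbase (B1 x)" "is_filterbase (B2 x)"
    and "\<forall>B\<in>B1 x. x \<in> B \<and> B \<subseteq> X" "\<forall>B\<in>B2 x. x \<in> B \<and> B \<subseteq> X"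
    using assms unfolding weak_base_on_def by blast+
  then show "is_filterbase (join_base B1 B2 x) \<and> (\<forall>B\<in>join_base B1 B2 x. x \<in> B \<and> B \<subseteq> X)"
    unfolding join_base_def using is_filterbase_join by blast
qed

lemma ex_join_base_subset_iff:
  "(\<exists>C\<in>join_base B1 B2 x. C \<subseteq> U) \<longleftrightarrow> (\<exists>b\<in>B1 x. b \<subseteq> U) \<and> (\<exists>b\<in>B2 x. b \<subseteq> U)"
  unfolding join_base_def by auto

lemma weak_base_for_meet_topology:
  assumes X: "topspace T1 = topspace T2"
    and B1: "weak_base_for T1 B1" and B2: "weak_base_for T2 B2"
  shows "weak_base_for (meet_topology T1 T2) (join_base B1 B2)"
proof -
  have open1: "openin T1 U \<longleftrightarrow> U \<subseteq> topspace T1 \<and> (\<forall>x\<in>U. \<exists>b\<in>B1 x. b \<subseteq> U)"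
    and open2: "openin T2 U \<longleftrightarrow> U \<subseteq> topspace T1 \<and> (\<forall>x\<in>U. \<exists>b\<in>B2 x. b \<subseteq> U)" for U
    using B1 B2 X unfolding weak_base_for_def by auto
  have "openin (meet_topology T1 T2) U \<longleftrightarrow>
      U \<subseteq> topspace T1 \<and> (\<forall>x\<in>U. \<exists>C\<in>join_base B1 B2 x. C \<subseteq> U)" for U
    unfolding openin_meet_topology ex_join_base_subset_iff open1 open2 by blast
  moreover have "weak_base_on (topspace T1) (join_base B1 B2)"
    using B1 B2 X unfolding weak_base_for_def by (simp add: weak_base_on_join_base)
  ultimately show ?thesis
    unfolding weak_base_for_def topspace_meet_topology[OF X] by simp
qed

theorem lemma2p6:
  fixes X :: "'a set" and T1 T2 :: "'a topology" and B1 B2 :: "'a \<Rightarrow> 'a set set"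
  assumes "topspace T1 = X" and "topspace T2 = X"
    and "weak_base_for T1 B1" and "weak_base_for T2 B2"
  shows "weak_base_for (meet_topology T1 T2)
           (\<lambda>x. {C. \<exists>b1\<in>B1 x. \<exists>b2\<in>B2 x. C = b1 \<union> b2})"
  using weak_base_for_meet_topology[of T1 T2 B1 B2] assms
  unfolding join_base_def by simp

end
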